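(* Let $\lambda\in\Lambda$ and $z\in\mathbb C_p$. (i) If $\rho<|z|<1$, then $|Q_\lambda(z)|=p|z|^p>|z|$. (ii) If $|z|\le\rho$, then $|Q_\lambda(z)|\le\rho$. (iii) If $|z-1|<1$, then $|Q_\lambda(z)-1|=p|z-1|$. (iv) If $1<|z|<\hat r$, then $|Q_\lambda(z)|=p|z|^{p+1}$.
   Context: Let $p$ be a prime, $\mathbb C_p$ with $p$-adic absolute value, $|p|=1/p$. $\Lambda=\{\lambda\in\mathbb C_p:|\lambda-1|<1\}$, $P_\lambda(z)=\frac{\lambda}{p}z^p+\left(1-\frac{\lambda}{p}\right)z^{p+1}$, $\rho=p^{-1/(p-1)}$. Fix $\hat r\in|\mathbb C_p^*|$, $\hat r>1$, $B=\{z:|z|\le\hat r\}$; $\mathcal H(B)$ is the ring of power series $\sum a_iz^i$ convergent on $B$ with norm $\|f\|_B=\sup_i|a_i|\hat r^{\,i}$. Fix $Q\in\mathcal H(B)$ with $\|Q\|_B<\rho$, $Q^*_\lambda=P_\lambda+Q$, and let $h(\lambda)$ be the unique fixed point of $Q^*_\lambda$ in $\{z:|z-1|\le|Q(1)|/p\}$. Define $Q_\lambda(z)=P_\lambda(z+h(\lambda)-1)+Q(z+h(\lambda)-1)+1-h(\lambda)$ for $z\in B$ (the conjugate of $Q^*_\lambda$ by $A_\lambda(z)=z+h(\lambda)-1$). *)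

theory Defs
  imports "HOL-Analysis.Analysis" "HOL-Computational_Algebra.Polynomial"
begin

text \<open>A model of C_p: an algebraically closed field of characteristic 0 (the type 'a)
  with an absolute value v that is non-archimedean, satisfies v p = 1/p, is complete,
  and in which the algebraic numbers are dense.  These properties characterise C_p up to
  isometric isomorphism.\<close>

definition nonarch_abs :: "('a::field \<Rightarrow> real) \<Rightarrow> bool" where
  "nonarch_abs v \<longleftrightarrow> (\<forall>x. 0 \<le> v x) \<and> (\<forall>x. v x = 0 \<longleftrightarrow> x = 0)
     \<and> (\<forall>x y. v (x * y) = v x * v y) \<and> (\<forall>x y. v (x + y) \<le> max (v x) (v y))"

definition v_cauchy :: "('a::field \<Rightarrow> real) \<Rightarrow> (nat \<Rightarrow> 'a) \<Rightarrow> bool" where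
  "v_cauchy v X \<longleftrightarrow> (\<forall>e>0. \<exists>N. \<forall>m\<ge>N. \<forall>n\<ge>N. v (X m - X n) < e)"

definition v_lim :: "('a::field \<Rightarrow> real) \<Rightarrow> (nat \<Rightarrow> 'a) \<Rightarrow> 'a \<Rightarrow> bool" where
  "v_lim v X L \<longleftrightarrow> (\<lambda>n. v (X n - L)) \<longlonglongrightarrow> 0"

definition v_complete :: "('a::field \<Rightarrow> real) \<Rightarrow> bool" where
  "v_complete v \<longleftrightarrow> (\<forall>X. v_cauchy v X \<longrightarrow> (\<exists>L. v_lim v X L))"

definition is_Cp :: "nat \<Rightarrow> ('a::{alg_closed_field, field_char_0} \<Rightarrow> real) \<Rightarrow> bool" where
  "is_Cp p v \<longleftrightarrow> prime p \<and> nonarch_abs v \<and> v (of_nat p) = 1 / real p \<and> v_complete v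
     \<and> (\<forall>x e. e > 0 \<longrightarrow> (\<exists>y. algebraic y \<and> v (x - y) < e))"

definition rho :: "nat \<Rightarrow> real" where
  "rho p = real p powr (- 1 / (real p - 1))"

definition ps_converges_at :: "('a::field \<Rightarrow> real) \<Rightarrow> (nat \<Rightarrow> 'a) \<Rightarrow> 'a \<Rightarrow> bool" where
  "ps_converges_at v a z \<longleftrightarrow> (\<exists>s. v_lim v (\<lambda>n. \<Sum>i<n. a i * z ^ i) s)"

definition ps_eval :: "('a::field \<Rightarrow> real) \<Rightarrow> (nat \<Rightarrow> 'a) \<Rightarrow> 'a \<Rightarrow> 'a" where
  "ps_eval v a z = (THE s. v_lim v (\<lambda>n. \<Sum>i<n. a i * z ^ i) s)"

definition in_HB :: "('a::field \<Rightarrow> real) \<Rightarrow> real \<Rightarrow> (nat \<Rightarrow> 'a) \<Rightarrow> bool" where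
  "in_HB v r a \<longleftrightarrow> (\<forall>z. v z \<le> r \<longrightarrow> ps_converges_at v a z)"

definition HB_norm :: "('a::field \<Rightarrow> real) \<Rightarrow> real \<Rightarrow> (nat \<Rightarrow> 'a) \<Rightarrow> real" where
  "HB_norm v r a = (SUP i. v (a i) * r ^ i)"

definition P_lam :: "nat \<Rightarrow> 'a::field \<Rightarrow> 'a \<Rightarrow> 'a" where
  "P_lam p lam z = lam / of_nat p * z ^ p + (1 - lam / of_nat p) * z ^ (p + 1)"

definition Qstar :: "('a::field \<Rightarrow> real) \<Rightarrow> nat \<Rightarrow> (nat \<Rightarrow> 'a) \<Rightarrow> 'a \<Rightarrow> 'a \<Rightarrow> 'a" where
  "Qstar v p a lam z = P_lam p lam z + ps_eval v a z"

definition h_fix :: "('a::field \<Rightarrow> real) \<Rightarrow> nat \<Rightarrow> (nat \<Rightarrow> 'a) \<Rightarrow> 'a \<Rightarrow> 'a" where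
  "h_fix v p a lam = (THE w. v (w - 1) \<le> v (ps_eval v a 1) / real p \<and> Qstar v p a lam w = w)"

definition Q_lam :: "('a::field \<Rightarrow> real) \<Rightarrow> nat \<Rightarrow> (nat \<Rightarrow> 'a) \<Rightarrow> 'a \<Rightarrow> 'a \<Rightarrow> 'a" where
  "Q_lam v p a lam z = (let h = h_fix v p a lam in
     P_lam p lam (z + h - 1) + ps_eval v a (z + h - 1) + 1 - h)"

end

theory Submission
  imports Defs
begin

text \<open>Everything follows from the ultrametric inequality and its isosceles form
  |x + y| = |x| when |y| < |x|. The coefficients lam/p and 1 - lam/p of P_lam have absolute
  value p, so P_lam(w) is dominated by its degree p term when |w| < 1 and by its degree p + 1
  term when |w| > 1. The perturbation Q has norm below rho, and so does the translation h - 1: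
  h is found by the contraction principle applied to the Newton-type map
  z - (Q*_lam(z) - z)/(p - lam/p), which contracts the disc |z - 1| \<le> |Q(1)|/p by the factor
  ||Q||/p. This gives (i), (ii) and (iv). For (iii), Q_lam(z) - 1 = Q*_lam(z + h - 1) - Q*_lam(h)
  is P_lam'(1) (z - 1) up to a Taylor remainder of P_lam and an increment of Q, both strictly
  smaller than p |z - 1|.\<close>

section \<open>Non-archimedean absolute values\<close>

locale nonarch_field =
  fixes v :: "'a::field \<Rightarrow> real"
  assumes nonarch: "nonarch_abs v"
begin

lemma v_nonneg [simp]: "0 \<le> v x"
  using nonarch unfolding nonarch_abs_def by blast

lemma v_eq_0_iff [simp]: "v x = 0 \<longleftrightarrow> x = 0"
  using nonarch unfolding nonarch_abs_def by blast

lemma v_zero [simp]: "v 0 = 0"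
  by simp

lemma v_gt_0: "x \<noteq> 0 \<Longrightarrow> 0 < v x"
  using v_nonneg[of x] v_eq_0_iff[of x] by linarith

lemma v_mult: "v (x * y) = v x * v y"
  using nonarch unfolding nonarch_abs_def by blast

lemma v_add_le_max: "v (x + y) \<le> max (v x) (v y)"
  using nonarch unfolding nonarch_abs_def by blast

lemma v_one [simp]: "v 1 = 1"
  using v_mult[of 1 1] v_eq_0_iff[of 1] by (metis mult_cancel_left1 one_neq_zero)

lemma v_minus [simp]: "v (- x) = v x"
proof -
  have "v (-1) * v (-1) = 1"
    using v_mult[of "-1" "-1"] by simp
  then have "v (-1) = 1"
    by (metis abs_of_nonneg abs_square_eq_1 power2_eq_square v_nonneg)
  then show ?thesis
    using v_mult[of "-1" x] by simp
qed

lemma v_minus_commute: "v (x - y) = v (y - x)"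
  by (metis minus_diff_eq v_minus)

lemma v_diff_le_max: "v (x - y) \<le> max (v x) (v y)"
  using v_add_le_max[of x "- y"] by simp

lemma v_power: "v (x ^ n) = v x ^ n"
  by (induction n) (simp_all add: v_mult)

lemma v_divide: "v (x / y) = v x / v y"
proof (cases "y = 0")
  case False
  then have "v y * v (inverse y) = 1"
    by (metis right_inverse v_one v_mult)
  then show ?thesis
    by (simp add: divide_inverse v_mult inverse_unique)
qed simp

lemma v_of_nat_le_1: "v (of_nat n) \<le> 1"
proof (induction n)
  case (Suc n)
  then show ?case
    using v_add_le_max[of 1 "of_nat n"] by simp
qed simp

lemma v_add_le: "v x \<le> B \<Longrightarrow> v y \<le> B \<Longrightarrow> v (x + y) \<le> B"
  using v_add_le_max[of x y] by linarith

lemma v_add_less: "v x < B \<Longrightarrow> v y < B \<Longrightarrow> v (x + y) < B"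
  using v_add_le_max[of x y] by linarith

lemma v_diff_le: "v x \<le> B \<Longrightarrow> v y \<le> B \<Longrightarrow> v (x - y) \<le> B"
  using v_diff_le_max[of x y] by linarith

lemma v_diff_less: "v x < B \<Longrightarrow> v y < B \<Longrightarrow> v (x - y) < B"
  using v_diff_le_max[of x y] by linarith

lemma v_add_eq_left: "v y < v x \<Longrightarrow> v (x + y) = v x"
proof -
  assume less: "v y < v x"
  have "v x \<le> max (v (x + y)) (v y)"
    using v_diff_le_max[of "x + y" y] by simp
  with less have "v x \<le> v (x + y)"
    by linarith
  moreover have "v (x + y) \<le> v x"
    using v_add_le_max[of x y] less by simp
  ultimately show ?thesis
    by simp
qed

lemma v_sum_le:
  "finite A \<Longrightarrow> 0 \<le> B \<Longrightarrow> (\<And>i. i \<in> A \<Longrightarrow> v (f i) \<le> B) \<Longrightarrow> v (sum f A) \<le> B"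
  by (induction A rule: finite_induct) (auto intro: v_add_le)

lemma v_le_1_if_near_1: "v (x - 1) \<le> 1 \<Longrightarrow> v x \<le> 1"
  using v_add_le[of "x - 1" 1 1] by simp

lemma v_lim_const: "v_lim v (\<lambda>n. c) c"
  unfolding v_lim_def by simp

lemma v_lim_sandwich: "f \<longlonglongrightarrow> 0 \<Longrightarrow> (\<And>n. v (X n - L) \<le> f n) \<Longrightarrow> v_lim v X L"
  unfolding v_lim_def by (rule real_tendsto_sandwich[where f = "\<lambda>n. 0" and h = f]) auto

lemma v_lim_diff: "v_lim v X L \<Longrightarrow> v_lim v Y M \<Longrightarrow> v_lim v (\<lambda>n. X n - Y n) (L - M)"
proof -
  assume "v_lim v X L" "v_lim v Y M"
  then have "(\<lambda>n. max (v (X n - L)) (v (Y n - M))) \<longlonglongrightarrow> max 0 0"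
    unfolding v_lim_def by (intro tendsto_max)
  moreover have "v (X n - Y n - (L - M)) \<le> max (v (X n - L)) (v (Y n - M))" for n
    using v_diff_le_max[of "X n - L" "Y n - M"] by (simp add: algebra_simps)
  ultimately show ?thesis
    by (intro v_lim_sandwich) auto
qed

lemma v_lim_le: "v_lim v X L \<Longrightarrow> (\<And>n. v (X n) \<le> B) \<Longrightarrow> v L \<le> B"
proof -
  assume lim: "v_lim v X L" and bound: "\<And>n. v (X n) \<le> B"
  have "(\<lambda>n. max B (v (X n - L))) \<longlonglongrightarrow> max B 0"
    using lim unfolding v_lim_def by (intro tendsto_intros)
  moreover have "v L \<le> max B (v (X n - L))" for n
    using v_diff_le_max[of "X n" "X n - L"] bound[of n] by simp
  ultimately have "v L \<le> max B 0"
    by (intro LIMSEQ_le_const) auto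
  moreover have "0 \<le> B"
    using bound[of 0] v_nonneg[of "X 0"] by linarith
  ultimately show ?thesis
    by simp
qed

lemma v_lim_unique: "v_lim v X L \<Longrightarrow> v_lim v X M \<Longrightarrow> L = M"
  using v_lim_le[OF v_lim_diff, of X L X M 0] v_nonneg[of "L - M"] by simp

lemma v_power_diff_le:
  assumes "v x \<le> 1" "v y \<le> 1"
  shows "v (x ^ n - y ^ n) \<le> v (x - y)"
proof (induction n)
  case (Suc n)
  have "x ^ Suc n - y ^ Suc n = x * (x ^ n - y ^ n) + (x - y) * y ^ n"
    by (simp add: algebra_simps)
  moreover have "v (x * (x ^ n - y ^ n)) \<le> v (x - y)"
    using Suc assms mult_mono[of "v x" 1 "v (x ^ n - y ^ n)" "v (x - y)"] by (simp add: v_mult)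
  moreover have "v ((x - y) * y ^ n) \<le> v (x - y)"
    using assms by (simp add: v_mult v_power mult_left_le power_le_one)
  ultimately show ?case
    by (simp add: v_add_le)
qed simp

lemma v_power_diff_linear_le:
  assumes r: "r \<le> 1" and x: "v (x - 1) \<le> r" and y: "v (y - 1) \<le> r"
  shows "v (x ^ n - y ^ n - of_nat n * (x - y)) \<le> r * v (x - y)"
proof (induction n)
  case 0
  have "0 \<le> r"
    using x v_nonneg[of "x - 1"] by linarith
  then show ?case
    by simp
next
  case (Suc n)
  have vx: "v x \<le> 1" and vy: "v y \<le> 1"
    using r x y v_le_1_if_near_1 by auto
  have split: "x ^ Suc n - y ^ Suc n - of_nat (Suc n) * (x - y)
      = x * (x ^ n - y ^ n - of_nat n * (x - y)) + (of_nat n * (x - 1) + (y ^ n - 1)) * (x - y)"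
    by (simp add: algebra_simps)
  have "v (x * (x ^ n - y ^ n - of_nat n * (x - y))) \<le> r * v (x - y)"
    using Suc vx mult_mono[of "v x" 1 _ "r * v (x - y)"] by (simp add: v_mult)
  moreover have "v (of_nat n * (x - 1) + (y ^ n - 1)) \<le> r"
  proof (rule v_add_le)
    show "v (of_nat n * (x - 1)) \<le> r"
      using v_of_nat_le_1[of n] x mult_mono[of "v (of_nat n)" 1 "v (x - 1)" r]
      by (simp add: v_mult)
    show "v (y ^ n - 1) \<le> r"
      using v_power_diff_le[OF vy, of 1 n] y by simp
  qed
  then have "v ((of_nat n * (x - 1) + (y ^ n - 1)) * (x - y)) \<le> r * v (x - y)"
    unfolding v_mult by (rule mult_right_mono) simp
  ultimately show ?case
    unfolding split by (rule v_add_le)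
qed

section \<open>The contraction principle\<close>

lemma v_cauchy_if_geometric:
  assumes dist: "\<And>m n. v (X (m + n) - X n) \<le> k ^ n * R" and k: "0 \<le> k" "k < 1"
  shows "v_cauchy v X"
  unfolding v_cauchy_def
proof (intro allI impI)
  fix e :: real
  assume "0 < e"
  have "(\<lambda>n. k ^ n * R) \<longlonglongrightarrow> 0"
    using k by (intro tendsto_mult_left_zero LIMSEQ_power_zero) simp
  then have "\<forall>\<^sub>F n in sequentially. k ^ n * R < e"
    using \<open>0 < e\<close> by (rule order_tendstoD)
  then obtain M where M: "\<And>n. n \<ge> M \<Longrightarrow> k ^ n * R < e"
    unfolding eventually_sequentially by blast
  have ordered: "v (X m - X n) < e" if "n \<le> m" "n \<ge> M" for m n
    using dist[of "m - n" n] M[of n] that by simp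
  have "v (X m - X n) < e" if "m \<ge> M" "n \<ge> M" for m n
  proof (cases "n \<le> m")
    case True
    then show ?thesis
      using ordered that by blast
  next
    case False
    then show ?thesis
      using ordered[of m n] that v_minus_commute[of "X m"] by simp
  qed
  then show "\<exists>M. \<forall>m\<ge>M. \<forall>n\<ge>M. v (X m - X n) < e"
    by blast
qed

lemma contraction_iterate_dist:
  assumes maps: "\<And>x. v (x - c) \<le> R \<Longrightarrow> v (T x - c) \<le> R"
    and contr: "\<And>x y. v (x - c) \<le> R \<Longrightarrow> v (y - c) \<le> R \<Longrightarrow> v (T x - T y) \<le> k * v (x - y)"
    and k: "0 \<le> k" and x: "v (x - c) \<le> R"
  shows "v ((T ^^ (m + n)) x - (T ^^ n) x) \<le> k ^ n * R"
proof -
  have in_ball: "v ((T ^^ n) x - c) \<le> R" for n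
    by (induction n) (simp_all add: x maps)
  show ?thesis
  proof (induction n)
    case 0
    show ?case
      using v_diff_le[OF in_ball in_ball, of m 0] by simp
  next
    case (Suc n)
    have "v ((T ^^ (m + Suc n)) x - (T ^^ Suc n) x) \<le> k * v ((T ^^ (m + n)) x - (T ^^ n) x)"
      using contr[OF in_ball in_ball] by simp
    also have "\<dots> \<le> k * (k ^ n * R)"
      using Suc k by (rule mult_left_mono)
    finally show ?case
      by simp
  qed
qed

end

locale complete_nonarch_field = nonarch_field +
  assumes complete: "v_complete v"
begin

lemma contraction_unique_fixpoint_in_ball:
  assumes maps: "\<And>x. v (x - c) \<le> R \<Longrightarrow> v (T x - c) \<le> R"
    and contr: "\<And>x y. v (x - c) \<le> R \<Longrightarrow> v (y - c) \<le> R \<Longrightarrow> v (T x - T y) \<le> k * v (x - y)"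
    and k: "0 \<le> k" "k < 1" and R: "0 \<le> R"
  shows "\<exists>!x. v (x - c) \<le> R \<and> T x = x"
proof (rule ex_ex1I)
  define X where "X n = (T ^^ n) c" for n
  have in_ball: "v (X n - c) \<le> R" for n
    unfolding X_def by (induction n) (simp_all add: R maps)
  have "v_cauchy v X"
    unfolding X_def using contraction_iterate_dist[OF maps contr k(1)] R
    by (intro v_cauchy_if_geometric[where R = R, OF _ k]) simp
  then obtain L where L: "v_lim v X L"
    using complete unfolding v_complete_def by blast
  have L_in_ball: "v (L - c) \<le> R"
    using v_lim_le[OF v_lim_diff[OF L v_lim_const]] in_ball by simp
  have "v_lim v (\<lambda>n. X (Suc n)) (T L)"
  proof (rule v_lim_sandwich)
    show "(\<lambda>n. k * v (X n - L)) \<longlonglongrightarrow> 0"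
      using L unfolding v_lim_def by (intro tendsto_mult_right_zero)
    show "v (X (Suc n) - T L) \<le> k * v (X n - L)" for n
      unfolding X_def using contr[OF in_ball[unfolded X_def] L_in_ball] by simp
  qed
  moreover have "v_lim v (\<lambda>n. X (Suc n)) L"
    using L unfolding v_lim_def by (rule LIMSEQ_Suc)
  ultimately have "T L = L"
    by (rule v_lim_unique)
  with L_in_ball show "\<exists>x. v (x - c) \<le> R \<and> T x = x"
    by blast
next
  fix x y
  assume x: "v (x - c) \<le> R \<and> T x = x" and y: "v (y - c) \<le> R \<and> T y = y"
  then have "v (x - y) \<le> k * v (x - y)"
    using contr[of x y] by simp
  with k have "v (x - y) \<le> 0"
    by (metis mult_le_cancel_right1 not_le v_nonneg)
  then show "x = y"
    using v_nonneg[of "x - y"] by simp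
qed

end

section \<open>Power series on a closed disc\<close>

locale HB_series = nonarch_field v for v :: "'a::field \<Rightarrow> real" +
  fixes r :: real and a :: "nat \<Rightarrow> 'a"
  assumes radius_attained: "\<exists>c. v c = r" and converges: "in_HB v r a"
begin

lemma ps_eval_lim: "v z \<le> r \<Longrightarrow> v_lim v (\<lambda>n. \<Sum>i<n. a i * z ^ i) (ps_eval v a z)"
  using converges v_lim_unique unfolding in_HB_def ps_converges_at_def ps_eval_def
  by (metis theI)

text \<open>This is where r \<in> |C_p| is needed: without a point of absolute value r the
  supremum defining HB_norm could be a junk value.\<close>

lemma bdd_above_HB_terms: "bdd_above (range (\<lambda>i. v (a i) * r ^ i))"
proof -
  obtain c where c: "v c = r"
    using radius_attained by blast
  define S where "S n = (\<Sum>i<n. a i * c ^ i) - ps_eval v a c" for n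
  have "(\<lambda>n. v (S n)) \<longlonglongrightarrow> 0"
    using ps_eval_lim[of c] c unfolding S_def v_lim_def by simp
  then obtain K where K: "\<And>n. v (S n) \<le> K"
    by (metis BseqE convergentI convergent_imp_Bseq real_norm_def abs_of_nonneg v_nonneg)
  have "v (a i) * r ^ i = v (S (Suc i) - S i)" for i
    by (simp add: S_def v_mult v_power c)
  then have "v (a i) * r ^ i \<le> K" for i
    using v_diff_le[OF K K] by simp
  then show ?thesis
    by (intro bdd_aboveI) auto
qed

lemma HB_term_le_norm: "v (a i) * r ^ i \<le> HB_norm v r a"
  unfolding HB_norm_def by (rule cSUP_upper[OF UNIV_I bdd_above_HB_terms])

lemma HB_norm_nonneg: "0 \<le> HB_norm v r a"
  using HB_term_le_norm[of 0] by (simp add: order_trans[OF v_nonneg])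

lemma v_ps_eval_le: "v z \<le> r \<Longrightarrow> v (ps_eval v a z) \<le> HB_norm v r a"
proof (rule v_lim_le[OF ps_eval_lim])
  fix n
  assume z: "v z \<le> r"
  have "v (a i * z ^ i) \<le> HB_norm v r a" for i
  proof -
    have "v (a i * z ^ i) \<le> v (a i) * r ^ i"
      using z by (simp add: v_mult v_power mult_left_mono power_mono)
    then show ?thesis
      using HB_term_le_norm order_trans by blast
  qed
  then show "v (\<Sum>i<n. a i * z ^ i) \<le> HB_norm v r a"
    by (intro v_sum_le HB_norm_nonneg) auto
qed

lemma v_ps_eval_diff_le:
  assumes r: "1 \<le> r" and z: "v z \<le> 1" and w: "v w \<le> 1"
  shows "v (ps_eval v a z - ps_eval v a w) \<le> HB_norm v r a * v (z - w)"
proof (rule v_lim_le[OF v_lim_diff[OF ps_eval_lim ps_eval_lim]])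
  show "v z \<le> r" "v w \<le> r"
    using r z w by linarith+
  fix n
  have "v (a i * (z ^ i - w ^ i)) \<le> HB_norm v r a * v (z - w)" for i
  proof -
    have "v (a i * (z ^ i - w ^ i)) \<le> v (a i) * v (z - w)"
      using v_power_diff_le[OF z w, of i] by (simp add: v_mult mult_left_mono)
    also have "\<dots> \<le> v (a i) * r ^ i * v (z - w)"
      using mult_left_mono[OF one_le_power[OF r, of i] v_nonneg[of "a i"]]
      by (intro mult_right_mono) auto
    also have "\<dots> \<le> HB_norm v r a * v (z - w)"
      using HB_term_le_norm by (simp add: mult_right_mono)
    finally show ?thesis .
  qed
  moreover have "(\<Sum>i<n. a i * z ^ i) - (\<Sum>i<n. a i * w ^ i) = (\<Sum>i<n. a i * (z ^ i - w ^ i))"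
    by (simp add: sum_subtractf algebra_simps)
  ultimately show "v ((\<Sum>i<n. a i * z ^ i) - (\<Sum>i<n. a i * w ^ i)) \<le> HB_norm v r a * v (z - w)"
    using HB_norm_nonneg by (simp add: v_sum_le)
qed

end

section \<open>The polynomial P_lam\<close>

lemma P_lam_one [simp]: "P_lam p lam 1 = 1"
  unfolding P_lam_def by simp

locale P_lam_setting = nonarch_field v for v :: "'a::field \<Rightarrow> real" +
  fixes p :: nat and lam :: 'a
  assumes p_gt_1: "1 < p" and v_p: "v (of_nat p) = 1 / real p" and lam_near_1: "v (lam - 1) < 1"
begin

lemma of_nat_p_nonzero: "of_nat p \<noteq> (0 :: 'a)"
  using v_p p_gt_1 by auto

lemma v_lam: "v lam = 1"
  using v_add_eq_left[of "lam - 1" 1] lam_near_1 by simp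

lemma v_lam_div_p: "v (lam / of_nat p) = real p"
  by (simp add: v_divide v_lam v_p)

lemma v_diff_lam_div_p: "v c \<le> 1 \<Longrightarrow> v (c - lam / of_nat p) = real p"
  using v_add_eq_left[of c "- (lam / of_nat p)"] v_lam_div_p p_gt_1 by simp

text \<open>The derivative of P_lam at 1 is p + 1 - lam/p.\<close>

lemma P_lam_linear_approx:
  assumes r: "r \<le> 1" and x: "v (x - 1) \<le> r" and y: "v (y - 1) \<le> r"
  shows "v (P_lam p lam x - P_lam p lam y - (of_nat p + 1 - lam / of_nat p) * (x - y))
    \<le> real p * r * v (x - y)"
proof -
  let ?lp = "lam / of_nat p"
  have split: "P_lam p lam x - P_lam p lam y - (of_nat p + 1 - ?lp) * (x - y)
    = ?lp * (x ^ p - y ^ p - of_nat p * (x - y))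
      + (1 - ?lp) * (x ^ (p + 1) - y ^ (p + 1) - of_nat (p + 1) * (x - y))"
    unfolding P_lam_def using of_nat_p_nonzero by (simp add: field_simps)
  have term_bound: "v (c * (x ^ n - y ^ n - of_nat n * (x - y))) \<le> real p * r * v (x - y)"
    if "v c = real p" for c n
    using mult_left_mono[OF v_power_diff_linear_le[OF r x y, of n], of "real p"] that
    by (simp add: v_mult mult.assoc)
  show ?thesis
    unfolding split
    by (intro v_add_le term_bound) (simp_all add: v_lam_div_p v_diff_lam_div_p)
qed

lemma v_P_lam_of_less_1:
  assumes w: "v w < 1"
  shows "v (P_lam p lam w) = real p * v w ^ p"
proof (cases "w = 0")
  case False
  have split: "P_lam p lam w = (lam / of_nat p) * w ^ p * (1 - w) + w ^ (p + 1)"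
    unfolding P_lam_def using of_nat_p_nonzero by (simp add: field_simps)
  have "v (1 - w) = 1"
    using v_add_eq_left[of "- w" 1] w by simp
  then have main: "v ((lam / of_nat p) * w ^ p * (1 - w)) = real p * v w ^ p"
    by (simp add: v_mult v_power v_divide v_lam v_p)
  have "v (w ^ (p + 1)) = v w * v w ^ p"
    by (simp add: v_power v_mult)
  also have "\<dots> < real p * v w ^ p"
    using w v_gt_0[OF False] p_gt_1 by (intro mult_strict_right_mono) auto
  finally show ?thesis
    unfolding split main [symmetric] by (rule v_add_eq_left)
qed (use p_gt_1 in \<open>simp add: P_lam_def power_0_left\<close>)

lemma v_P_lam_of_greater_1:
  assumes w: "1 < v w"
  shows "v (P_lam p lam w) = real p * v w ^ (p + 1)"
proof -
  have split: "P_lam p lam w = (1 - lam / of_nat p) * w ^ (p + 1) + (lam / of_nat p) * w ^ p"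
    unfolding P_lam_def by (simp add: algebra_simps)
  have main: "v ((1 - lam / of_nat p) * w ^ (p + 1)) = real p * v w ^ (p + 1)"
    by (simp add: v_mult v_power v_diff_lam_div_p)
  have "v ((lam / of_nat p) * w ^ p) = real p * v w ^ p"
    by (simp add: v_mult v_power v_divide v_lam v_p)
  also have "\<dots> < real p * v w ^ (p + 1)"
    using w p_gt_1 by (intro mult_strict_left_mono power_strict_increasing) auto
  finally show ?thesis
    unfolding split main [symmetric] by (rule v_add_eq_left)
qed

end

section \<open>The conjugated map Q_lam\<close>

lemma rho_pos: "1 < p \<Longrightarrow> 0 < rho p"
  unfolding rho_def by simp

lemma rho_less_1: "1 < p \<Longrightarrow> rho p < 1"
  unfolding rho_def by (intro powr_less_one) auto

lemma p_times_rho_power: "1 < p \<Longrightarrow> real p * rho p ^ (p - 1) = 1"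
proof -
  assume p: "1 < p"
  have "rho p ^ (p - 1) = real p powr (-1 / (real p - 1) * real (p - 1))"
    using rho_pos[OF p] unfolding rho_def by (simp add: powr_realpow [symmetric] powr_powr)
  also have "-1 / (real p - 1) * real (p - 1) = -1"
    using p by simp
  finally show ?thesis
    using p by (simp add: powr_neg_one)
qed

lemma rho_less_p_times_power:
  assumes p: "1 < p" and t: "rho p < t"
  shows "t < real p * t ^ p"
proof -
  have "1 = real p * rho p ^ (p - 1)"
    using p_times_rho_power[OF p] by simp
  also have "\<dots> < real p * t ^ (p - 1)"
    using p t rho_pos[OF p] by (intro mult_strict_left_mono power_strict_mono) auto
  finally have "t * 1 < t * (real p * t ^ (p - 1))"
    using t rho_pos[OF p] by (intro mult_strict_left_mono) auto
  also have "\<dots> = real p * t ^ p"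
    using p by (simp add: power_eq_if)
  finally show ?thesis
    by simp
qed

lemma p_times_rho_power_p: "1 < p \<Longrightarrow> real p * rho p ^ p = rho p"
  using p_times_rho_power[of p] by (simp add: power_eq_if)

locale perturbed_P_lam =
  complete_nonarch_field v + HB_series v rhat a + P_lam_setting v p lam
  for v :: "'a::field \<Rightarrow> real" and rhat a p lam +
  assumes rhat_gt_1: "1 < rhat" and HB_norm_less_rho: "HB_norm v rhat a < rho p"
begin

abbreviation "N \<equiv> HB_norm v rhat a"
abbreviation "Q \<equiv> ps_eval v a"
abbreviation "h \<equiv> h_fix v p a lam"

lemma N_less_1: "N < 1"
  using HB_norm_less_rho rho_less_1[OF p_gt_1] by simp

lemma N_div_p_le_N: "N / real p \<le> N"
  using HB_norm_nonneg p_gt_1 by (simp add: divide_le_eq mult_le_cancel_left1)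

lemma v_Q_le: "v z \<le> rhat \<Longrightarrow> v (Q z) \<le> N"
  by (rule v_ps_eval_le)

lemma v_Q_diff_le: "v z \<le> 1 \<Longrightarrow> v w \<le> 1 \<Longrightarrow> v (Q z - Q w) \<le> N * v (z - w)"
  using v_ps_eval_diff_le rhat_gt_1 by simp

text \<open>Newton's map for Qstar z - z with the derivative frozen at its value p - lam/p at 1.\<close>

definition newton :: "'a \<Rightarrow> 'a" where
  "newton z = z - (Qstar v p a lam z - z) / (of_nat p - lam / of_nat p)"

lemma v_newton_denom: "v (of_nat p - lam / of_nat p) = real p"
  using v_diff_lam_div_p v_p p_gt_1 by simp

lemma newton_fixpoint_iff: "newton z = z \<longleftrightarrow> Qstar v p a lam z = z"
  using v_newton_denom p_gt_1 by (auto simp: newton_def)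

lemma v_Q_1_div_p_le: "v (Q 1) / real p \<le> N / real p"
  using v_Q_le[of 1] rhat_gt_1 by (simp add: divide_right_mono)

lemma newton_contraction:
  assumes x: "v (x - 1) \<le> v (Q 1) / real p" and y: "v (y - 1) \<le> v (Q 1) / real p"
  shows "v (newton x - newton y) \<le> N / real p * v (x - y)"
proof -
  let ?R = "v (Q 1) / real p"
  define c where "c = of_nat p - lam / of_nat p"
  have c: "v c = real p" "c \<noteq> 0"
    using v_newton_denom p_gt_1 unfolding c_def by auto
  have R: "?R \<le> 1"
    using v_Q_1_div_p_le N_div_p_le_N N_less_1 by linarith
  have "newton x - newton y
      = - ((Qstar v p a lam x - x) - (Qstar v p a lam y - y) - c * (x - y)) / c"
    using c by (simp add: newton_def c_def [symmetric] field_simps)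
  also have "(Qstar v p a lam x - x) - (Qstar v p a lam y - y) - c * (x - y)
      = (P_lam p lam x - P_lam p lam y - (of_nat p + 1 - lam / of_nat p) * (x - y)) + (Q x - Q y)"
    by (simp add: Qstar_def c_def algebra_simps)
  finally have split: "newton x - newton y = - ((P_lam p lam x - P_lam p lam y
      - (of_nat p + 1 - lam / of_nat p) * (x - y)) + (Q x - Q y)) / c" .
  have "v (P_lam p lam x - P_lam p lam y - (of_nat p + 1 - lam / of_nat p) * (x - y))
      \<le> real p * ?R * v (x - y)"
    by (rule P_lam_linear_approx[OF R x y])
  also have "\<dots> \<le> N * v (x - y)"
    using v_Q_le[of 1] rhat_gt_1 p_gt_1 by (simp add: mult_right_mono)
  finally have "v ((P_lam p lam x - P_lam p lam y - (of_nat p + 1 - lam / of_nat p) * (x - y))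
      + (Q x - Q y)) \<le> N * v (x - y)"
    using v_Q_diff_le v_le_1_if_near_1 x y R by (intro v_add_le) auto
  then show ?thesis
    unfolding split v_divide v_minus c(1) using divide_right_mono[of _ _ "real p"] by simp
qed

lemma newton_maps_ball:
  assumes x: "v (x - 1) \<le> v (Q 1) / real p"
  shows "v (newton x - 1) \<le> v (Q 1) / real p"
proof -
  have "v (newton x - newton 1) \<le> N / real p * v (x - 1)"
    using newton_contraction[OF x] by simp
  also have "\<dots> \<le> v (x - 1)"
    using N_div_p_le_N N_less_1 HB_norm_nonneg p_gt_1 by (intro mult_left_le_one_le) auto
  finally have "v (newton x - newton 1) \<le> v (Q 1) / real p"
    using x by linarith
  moreover have "v (newton 1 - 1) = v (Q 1) / real p"
    by (simp add: newton_def Qstar_def v_divide v_newton_denom)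
  ultimately show ?thesis
    using v_add_le[of "newton x - newton 1" _ "newton 1 - 1"] by simp
qed

lemma h_fix_spec: "v (h - 1) \<le> v (Q 1) / real p" "Qstar v p a lam h = h"
proof -
  have k: "0 \<le> N / real p" "N / real p < 1"
    using HB_norm_nonneg N_div_p_le_N N_less_1 by auto
  have R: "0 \<le> v (Q 1) / real p"
    by simp
  have "\<exists>!x. v (x - 1) \<le> v (Q 1) / real p \<and> newton x = x"
    using contraction_unique_fixpoint_in_ball[OF newton_maps_ball newton_contraction k R] .
  then have "\<exists>!x. v (x - 1) \<le> v (Q 1) / real p \<and> Qstar v p a lam x = x"
    by (simp add: newton_fixpoint_iff)
  then show "v (h - 1) \<le> v (Q 1) / real p" "Qstar v p a lam h = h"
    unfolding h_fix_def by (metis (mono_tags, lifting) theI')+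
qed

lemma v_h_minus_1_less_rho: "v (h - 1) < rho p"
  using h_fix_spec(1) v_Q_1_div_p_le N_div_p_le_N HB_norm_less_rho by linarith

lemma Q_lam_eq: "Q_lam v p a lam z = P_lam p lam (z + h - 1) + (Q (z + h - 1) - (h - 1))"
  unfolding Q_lam_def Let_def by (simp add: algebra_simps)

lemma v_perturbation_less_rho:
  assumes "v w \<le> rhat"
  shows "v (Q w - (h - 1)) < rho p"
proof (rule v_diff_less)
  show "v (Q w) < rho p"
    using v_Q_le[OF assms] HB_norm_less_rho by linarith
qed (rule v_h_minus_1_less_rho)

lemma v_shift_eq: "v (h - 1) < v z \<Longrightarrow> v (z + h - 1) = v z"
  using v_add_eq_left[of "h - 1" z] by (simp add: add_diff_eq)

lemma v_Q_lam_annulus: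
  assumes z: "rho p < v z" "v z < 1"
  shows "v (Q_lam v p a lam z) = real p * v z ^ p" "v z < real p * v z ^ p"
proof -
  have grows: "v z < real p * v z ^ p"
    using rho_less_p_times_power[OF p_gt_1 z(1)] .
  have w: "v (z + h - 1) = v z"
    using v_shift_eq v_h_minus_1_less_rho z(1) by simp
  have "v (Q (z + h - 1) - (h - 1)) < real p * v z ^ p"
    using v_perturbation_less_rho[of "z + h - 1"] w z rhat_gt_1 grows by simp
  then show "v (Q_lam v p a lam z) = real p * v z ^ p"
    unfolding Q_lam_eq using v_add_eq_left v_P_lam_of_less_1[of "z + h - 1"] w z(2) by simp
  show "v z < real p * v z ^ p"
    by (rule grows)
qed

lemma v_Q_lam_small:
  assumes z: "v z \<le> rho p"
  shows "v (Q_lam v p a lam z) \<le> rho p"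
proof -
  have w: "v (z + h - 1) \<le> rho p"
    using v_add_le[of z "rho p" "h - 1"] z v_h_minus_1_less_rho by (simp add: add_diff_eq)
  have "v (P_lam p lam (z + h - 1)) = real p * v (z + h - 1) ^ p"
    using w rho_less_1[OF p_gt_1] by (intro v_P_lam_of_less_1) simp
  also have "\<dots> \<le> real p * rho p ^ p"
    using w by (intro mult_left_mono power_mono) auto
  also have "\<dots> = rho p"
    using p_times_rho_power_p[OF p_gt_1] .
  finally show ?thesis
    unfolding Q_lam_eq
    using v_perturbation_less_rho[of "z + h - 1"] w rho_less_1[OF p_gt_1] rhat_gt_1
    by (intro v_add_le) auto
qed

lemma v_Q_lam_large:
  assumes z: "1 < v z" "v z < rhat"
  shows "v (Q_lam v p a lam z) = real p * v z ^ (p + 1)"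
proof -
  have w: "v (z + h - 1) = v z"
    using v_shift_eq v_h_minus_1_less_rho rho_less_1[OF p_gt_1] z(1) by simp
  have "rho p < 1"
    using rho_less_1[OF p_gt_1] .
  also have "1 < real p * v z ^ (p + 1)"
    using less_1_mult[of "real p" "v z ^ (p + 1)"] one_less_power[of "v z" "p + 1"] z p_gt_1
    by simp
  finally have "v (Q (z + h - 1) - (h - 1)) < real p * v z ^ (p + 1)"
    using v_perturbation_less_rho[of "z + h - 1"] w z(2) by simp
  then show ?thesis
    unfolding Q_lam_eq using v_add_eq_left v_P_lam_of_greater_1[of "z + h - 1"] w z(1) by simp
qed

lemma v_Q_lam_near_1:
  assumes z: "v (z - 1) < 1"
  shows "v (Q_lam v p a lam z - 1) = real p * v (z - 1)"
proof (cases "z = 1")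
  case False
  define u where "u = z - 1"
  define w where "w = z + h - 1"
  define r where "r = max (v u) (v (h - 1))"
  let ?d = "of_nat p + 1 - lam / of_nat p"
  have u: "0 < v u" "v u < 1"
    using False z v_gt_0 unfolding u_def by auto
  have r: "r < 1"
    unfolding r_def using u v_h_minus_1_less_rho rho_less_1[OF p_gt_1] by simp
  have w_h: "w - h = u"
    unfolding u_def w_def by simp
  have h: "v (h - 1) \<le> r" and w: "v (w - 1) \<le> r"
    unfolding r_def u_def w_def using v_add_le_max[of "z - 1" "h - 1"] by (auto simp: algebra_simps)
  have "Q_lam v p a lam z - 1
      = ?d * u + ((P_lam p lam w - P_lam p lam h - ?d * (w - h)) + (Q w - Q h))"
    using h_fix_spec(2) unfolding Q_lam_eq w_def [symmetric] Qstar_def w_h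
    by (simp add: algebra_simps)
  moreover have "v (P_lam p lam w - P_lam p lam h - ?d * (w - h)) < real p * v u"
  proof -
    have "v (P_lam p lam w - P_lam p lam h - ?d * (w - h)) \<le> real p * r * v u"
      using P_lam_linear_approx[OF less_imp_le[OF r] w h] unfolding w_h .
    also have "\<dots> < real p * v u"
      using r u p_gt_1 by simp
    finally show ?thesis .
  qed
  moreover have "v (Q w - Q h) < real p * v u"
  proof -
    have "v (Q w - Q h) \<le> N * v u"
      using v_Q_diff_le v_le_1_if_near_1 w h r unfolding w_h [symmetric] by simp
    also have "\<dots> < real p * v u"
      using N_less_1 p_gt_1 u by simp
    finally show ?thesis .
  qed
  moreover have "v (?d * u) = real p * v u"
    using v_diff_lam_div_p v_of_nat_le_1[of "Suc p"] by (simp add: v_mult add.commute)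
  ultimately show ?thesis
    unfolding u_def by (simp add: v_add_less v_add_eq_left)
qed (use h_fix_spec(2) in \<open>simp add: Q_lam_eq Qstar_def algebra_simps\<close>)

end

theorem lemma3p5:
  fixes v :: "'a::{alg_closed_field, field_char_0} \<Rightarrow> real"
    and p :: nat and rhat :: real and a :: "nat \<Rightarrow> 'a" and lam z :: 'a
  assumes Cp: "is_Cp p v"
    and rhat_val: "\<exists>c. c \<noteq> 0 \<and> v c = rhat"
    and rhat_gt: "rhat > 1"
    and Q_HB: "in_HB v rhat a"
    and Q_norm: "HB_norm v rhat a < rho p"
    and lam: "v (lam - 1) < 1"
  shows "(rho p < v z \<and> v z < 1 \<longrightarrow>
            v (Q_lam v p a lam z) = real p * v z ^ p \<and> real p * v z ^ p > v z)
       \<and> (v z \<le> rho p \<longrightarrow> v (Q_lam v p a lam z) \<le> rho p)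
       \<and> (v (z - 1) < 1 \<longrightarrow> v (Q_lam v p a lam z - 1) = real p * v (z - 1))
       \<and> (1 < v z \<and> v z < rhat \<longrightarrow> v (Q_lam v p a lam z) = real p * v z ^ (p + 1))"
proof -
  interpret perturbed_P_lam v rhat a p lam
    using Cp rhat_val rhat_gt Q_HB Q_norm lam unfolding is_Cp_def
    by unfold_locales (auto dest: prime_gt_1_nat)
  show ?thesis
    using v_Q_lam_annulus v_Q_lam_small v_Q_lam_near_1 v_Q_lam_large by blast
qed

end
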